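(* Let $u\in\mathbb{R}^m$. If there exists $b\in\mathbb{R}^p$ with $\mathcal{P}(b)\neq\emptyset$ such that $$K^+\overline{g}_{\mathcal{P}}(u,b)+K^-\underline{g}_{\mathcal{P}}(u,b)\le b,$$ then $u$ is solvable, i.e. there exists $x$ with $f(x,u)=0$; moreover such an $x$ can be found in $\mathcal{P}(b)$.
   Context: Let $f:\mathbb{R}^n\times\mathbb{R}^m\to\mathbb{R}^n$ be continuous and differentiable, with $f=M\psi$ for a continuously differentiable $\psi:\mathbb{R}^n\times\mathbb{R}^m\to\mathbb{R}^q$ and constant $M\in\mathbb{R}^{n\times q}$. There is a base point $(x_0,u_0)$ with $f(x_0,u_0)=0$ at which $J_{f,0}=\frac{\partial f}{\partial x}\big|_{(x_0,u_0)}$ is nonsingular; $J_{\psi,0}=\frac{\partial \psi}{\partial x}\big|_{(x_0,u_0)}$ and $g(x,u)=\psi(x,u)-J_{\psi,0}x\in\mathbb{R}^q$. Let $\underline{g},\overline{g}:\mathbb{R}^n\times\mathbb{R}^m\to\mathbb{R}^q$ satisfy $\underline{g}_k(x,u)\le g_k(x,u)\le\overline{g}_k(x,u)$ for all $(x,u)$ and $k$. A fixed matrix $A\in\mathbb{R}^{p\times n}$ is chosen so that $\mathcal{P}(b)=\{x:Ax\le b\}$ is bounded for every $b\in\mathbb{R}^p$. Define $\overline{g}_{\mathcal{P},k}(u,b)=\max_{x\in\mathcal{P}(b)}\overline{g}_k(x,u)$ and $\underline{g}_{\mathcal{P},k}(u,b)=\min_{x\in\mathcal{P}(b)}\underline{g}_k(x,u)$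 (assumed attained). Let $K=-AJ_{f,0}^{-1}M\in\mathbb{R}^{p\times q}$ and let $K^+,K^-$ be the matrices with $K^+_{ij}=K_{ij}$ if $K_{ij}>0$ and $0$ otherwise, $K^-_{ij}=K_{ij}$ if $K_{ij}<0$ and $0$ otherwise. $u$ is solvable if there is $x$ with $f(x,u)=0$. Vector inequalities are componentwise. *)

theory Defs
  imports "HOL-Analysis.Analysis"
begin

definition Ppoly :: "real^'n^'p \<Rightarrow> real^'p \<Rightarrow> (real^'n) set" where
  "Ppoly A b = {x. \<forall>i. (A *v x) $ i \<le> b $ i}"

text \<open>Upper bound of gbar over P(b) (a maximum whenever attained).\<close>
definition gP_upper :: "real^'n^'p \<Rightarrow> (real^'n \<Rightarrow> real^'m \<Rightarrow> real^'q) \<Rightarrow> real^'m \<Rightarrow> real^'p \<Rightarrow> real^'q" where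
  "gP_upper A gup u b = (\<chi> k. Sup ((\<lambda>x. gup x u $ k) ` Ppoly A b))"

definition gP_lower :: "real^'n^'p \<Rightarrow> (real^'n \<Rightarrow> real^'m \<Rightarrow> real^'q) \<Rightarrow> real^'m \<Rightarrow> real^'p \<Rightarrow> real^'q" where
  "gP_lower A glo u b = (\<chi> k. Inf ((\<lambda>x. glo x u $ k) ` Ppoly A b))"

definition pos_part_mat :: "real^'c^'r \<Rightarrow> real^'c^'r" where
  "pos_part_mat K = (\<chi> i j. if K $ i $ j > 0 then K $ i $ j else 0)"

definition neg_part_mat :: "real^'c^'r \<Rightarrow> real^'c^'r" where
  "neg_part_mat K = (\<chi> i j. if K $ i $ j < 0 then K $ i $ j else 0)"

end

theory Submission
  imports Defs
begin

text \<open>Since \<open>f = M \<psi>\<close> and \<open>J\<^sub>f = M J\<^sub>\<psi>\<close>, we can write \<open>f(x,u) = J\<^sub>f x + M g(x,u)\<close>, so the zeros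
  of \<open>f(\<cdot>,u)\<close> are exactly the fixed points of \<open>T x = -J\<^sub>f\<^sup>-\<^sup>1 M g(x,u)\<close>.  For \<open>x \<in> P(b)\<close> we have
  \<open>A T x = K g(x,u)\<close>, and bounding each entry of \<open>g(x,u)\<close> by the extremal values of the
  enclosures over \<open>P(b)\<close> (upper bound where \<open>K\<close> is positive, lower bound where it is negative)
  shows that the hypothesis makes \<open>T\<close> map the compact convex polytope \<open>P(b)\<close> into itself.
  Brouwer's fixed point theorem then yields the zero.\<close>

lemma closed_Ppoly: "closed (Ppoly A b)"
proof -
  have "Ppoly A b = (\<Inter>i. {x. (A *v x) $ i \<le> b $ i})"
    unfolding Ppoly_def by auto
  moreover have "closed {x. (A *v x) $ i \<le> b $ i}" for i
    by (intro closed_Collect_le continuous_intros linear_continuous_on matrix_vector_mul_linear_gen)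
  ultimately show ?thesis by auto
qed

lemma convex_Ppoly: "convex (Ppoly (A::real^'n^'p) b)"
  unfolding convex_def Ppoly_def
proof clarsimp
  fix x y :: "real^'n" and s t :: real and i
  assume x: "\<forall>i. (A *v x) $ i \<le> b $ i" and y: "\<forall>i. (A *v y) $ i \<le> b $ i"
    and "0 \<le> s" "0 \<le> t" "s + t = 1"
  have "(A *v (s *\<^sub>R x + t *\<^sub>R y)) $ i = s * (A *v x) $ i + t * (A *v y) $ i"
    by (simp add: matrix_vector_right_distrib matrix_vector_mult_scaleR)
  also have "\<dots> \<le> s * b $ i + t * b $ i"
    using x y \<open>0 \<le> s\<close> \<open>0 \<le> t\<close> by (intro add_mono mult_left_mono) auto
  also have "\<dots> = b $ i"
    using \<open>s + t = 1\<close> by (metis distrib_right mult_1)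
  finally show "(A *v (s *\<^sub>R x + t *\<^sub>R y)) $ i \<le> b $ i" .
qed

lemma Ppoly_fixed_point:
  assumes "bounded (Ppoly A b)" "Ppoly A b \<noteq> {}"
    and "continuous_on (Ppoly A b) T" "T ` Ppoly A b \<subseteq> Ppoly A b"
  shows "\<exists>x\<in>Ppoly A b. T x = x"
proof -
  have "compact (Ppoly A b)"
    using assms(1) closed_Ppoly by (simp add: compact_eq_bounded_closed)
  then show ?thesis
    using brouwer[OF _ convex_Ppoly assms(2,3)] assms(4)
    by (auto simp: image_subset_iff_funcset)
qed

lemma gP_upper_ge:
  assumes "x \<in> Ppoly A b"
    and "\<exists>z\<in>Ppoly A b. \<forall>y\<in>Ppoly A b. gup y u $ k \<le> gup z u $ k"
  shows "gup x u $ k \<le> gP_upper A gup u b $ k"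
  unfolding gP_upper_def using assms by (auto intro!: cSup_upper bdd_aboveI2)

lemma gP_lower_le:
  assumes "x \<in> Ppoly A b"
    and "\<exists>z\<in>Ppoly A b. \<forall>y\<in>Ppoly A b. glo z u $ k \<le> glo y u $ k"
  shows "gP_lower A glo u b $ k \<le> glo x u $ k"
  unfolding gP_lower_def using assms by (auto intro!: cInf_lower bdd_belowI2)

lemma mult_le_pos_neg_part:
  fixes c v l w :: real
  assumes "l \<le> v" "v \<le> w"
  shows "c * v \<le> (if c > 0 then c else 0) * w + (if c < 0 then c else 0) * l"
  using assms mult_left_mono[of v w c] mult_left_mono_neg[of l v c]
  by (cases "c > 0"; cases "c < 0") auto

lemma matrix_vector_mult_le_pos_neg_parts:
  fixes K :: "real^'c^'r"
  assumes "\<And>k. l $ k \<le> v $ k" "\<And>k. v $ k \<le> w $ k"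
  shows "(K *v v) $ i \<le> (pos_part_mat K *v w + neg_part_mat K *v l) $ i"
  using mult_le_pos_neg_part[OF assms]
  by (simp add: matrix_vector_mult_def pos_part_mat_def neg_part_mat_def
      sum.distrib[symmetric] sum_mono)

lemma in_Ppoly_if_enclosed:
  assumes "A *v y = K *v v" "\<And>k. l $ k \<le> v $ k" "\<And>k. v $ k \<le> w $ k"
    and "\<forall>i. (pos_part_mat K *v w + neg_part_mat K *v l) $ i \<le> b $ i"
  shows "y \<in> Ppoly A b"
  unfolding Ppoly_def
  using assms(1,4) matrix_vector_mult_le_pos_neg_parts[OF assms(2,3)] order_trans by fastforce

lemma matrix_vector_mult_uminus_left: "(- (K::real^'c^'r)) *v v = - (K *v v)"
  by (simp add: matrix_vector_mult_def vec_eq_iff sum_negf)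

lemma matrix_inv_right:
  assumes "invertible (J::real^'n^'n)"
  shows "J ** matrix_inv J = mat 1"
  using assms unfolding invertible_def matrix_inv_def by (rule someI_ex[THEN conjunct1])

lemma jacobian_factor:
  fixes M :: "real^'q^'n" and J\<Psi> :: "real^'n^'q" and J :: "real^'n^'n"
  assumes "((\<lambda>x. M *v \<Psi> x) has_derivative (\<lambda>h. J *v h)) (at x0)"
    and "(\<Psi> has_derivative (\<lambda>h. J\<Psi> *v h)) (at x0)"
  shows "J *v h = M *v (J\<Psi> *v h)"
proof -
  have "((\<lambda>x. M *v \<Psi> x) has_derivative (\<lambda>h. M *v (J\<Psi> *v h))) (at x0)"
    by (rule bounded_linear.has_derivative[OF _ assms(2)]) (rule matrix_vector_mul_bounded_linear)
  with assms(1) have "(\<lambda>h. J *v h) = (\<lambda>h. M *v (J\<Psi> *v h))"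
    using has_derivative_unique by metis
  then show ?thesis by metis
qed

lemma continuous_on_matrix_vector_mult [continuous_intros]:
  fixes B :: "real^'c^'r"
  assumes "continuous_on S G"
  shows "continuous_on S (\<lambda>x. B *v G x)"
  using continuous_on_compose[OF assms linear_continuous_on[OF matrix_vector_mul_bounded_linear]]
  by (simp add: o_def)

lemma continuous_on_partial_application:
  assumes "\<forall>z. ((\<lambda>z. \<Psi> (fst z) (snd z)) has_derivative D z) (at z)"
  shows "continuous_on UNIV (\<lambda>x. \<Psi> x u)"
proof -
  have "continuous_on UNIV (\<lambda>z. \<Psi> (fst z) (snd z))"
    using assms has_derivative_continuous by (intro continuous_at_imp_continuous_on ballI) blast
  then have "continuous_on UNIV ((\<lambda>z. \<Psi> (fst z) (snd z)) \<circ> (\<lambda>x. (x, u)))"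
    by (intro continuous_on_compose continuous_intros) (auto elim: continuous_on_subset)
  then show ?thesis by (simp add: o_def)
qed

theorem theorem2:
  fixes f :: "real^'n \<Rightarrow> real^'m \<Rightarrow> real^'n"
    and \<psi> :: "real^'n \<Rightarrow> real^'m \<Rightarrow> real^'q"
    and D\<psi> :: "(real,'n) vec \<times> (real,'m) vec \<Rightarrow> (((real,'n) vec \<times> (real,'m) vec) \<Rightarrow>\<^sub>L (real^'q))"
    and M :: "real^'q^'n"
    and x0 :: "real^'n" and u0 :: "real^'m"
    and Jf :: "real^'n^'n" and J\<psi> :: "real^'n^'q"
    and gup glo :: "real^'n \<Rightarrow> real^'m \<Rightarrow> real^'q"
    and A :: "real^'n^'p"
    and u :: "real^'m" and b :: "real^'p"
  assumes f_cont: "continuous_on UNIV (\<lambda>z. f (fst z) (snd z))"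
    and f_diff: "\<forall>z. (\<lambda>z. f (fst z) (snd z)) differentiable (at z)"
    and psi_C1: "\<forall>z. ((\<lambda>z. \<psi> (fst z) (snd z)) has_derivative blinfun_apply (D\<psi> z)) (at z)"
    and psi_C1_cont: "continuous_on UNIV D\<psi>"
    and f_eq: "\<forall>x u. f x u = M *v \<psi> x u"
    and base: "f x0 u0 = 0"
    and Jf_def: "((\<lambda>x. f x u0) has_derivative (\<lambda>h. Jf *v h)) (at x0)"
    and Jf_nonsing: "invertible Jf"
    and Jpsi_def: "((\<lambda>x. \<psi> x u0) has_derivative (\<lambda>h. J\<psi> *v h)) (at x0)"
    and g_bounds: "\<forall>x u k. gup x u $ k \<ge> (\<psi> x u - J\<psi> *v x) $ k
                          \<and> glo x u $ k \<le> (\<psi> x u - J\<psi> *v x) $ k"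
    and P_bounded: "\<forall>b'. bounded (Ppoly A b')"
    and max_attained: "\<forall>k. \<exists>x\<in>Ppoly A b. \<forall>y\<in>Ppoly A b. gup y u $ k \<le> gup x u $ k"
    and min_attained: "\<forall>k. \<exists>x\<in>Ppoly A b. \<forall>y\<in>Ppoly A b. glo x u $ k \<le> glo y u $ k"
    and P_nonempty: "Ppoly A b \<noteq> {}"
    and cond: "\<forall>i. (pos_part_mat (- (A ** matrix_inv Jf ** M)) *v gP_upper A gup u b
                  + neg_part_mat (- (A ** matrix_inv Jf ** M)) *v gP_lower A glo u b) $ i \<le> b $ i"
  shows "\<exists>x\<in>Ppoly A b. f x u = 0"
proof -
  define g where "g x = \<psi> x u - J\<psi> *v x" for x
  define T where "T x = - (matrix_inv Jf *v (M *v g x))" for x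
  have f_linearized: "f x u = Jf *v x + M *v g x" for x
    using jacobian_factor[of M "\<lambda>x. \<psi> x u0"] Jf_def Jpsi_def f_eq
    by (simp add: g_def matrix_vector_mult_diff_distrib)
  have "continuous_on UNIV T"
    unfolding T_def g_def
    by (intro continuous_intros continuous_on_partial_application[OF psi_C1])
  moreover have "T x \<in> Ppoly A b" if x: "x \<in> Ppoly A b" for x
  proof (rule in_Ppoly_if_enclosed[OF _ _ _ cond])
    show "gP_lower A glo u b $ k \<le> g x $ k" "g x $ k \<le> gP_upper A gup u b $ k" for k
      using gP_lower_le[where glo = glo and k = k, OF x min_attained[rule_format]]
        gP_upper_ge[where gup = gup and k = k, OF x max_attained[rule_format]]
        g_bounds[rule_format, of x u k]
      by (auto simp: g_def)
    show "A *v T x = (- (A ** matrix_inv Jf ** M)) *v g x"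
      by (simp add: T_def vec.neg matrix_vector_mul_assoc matrix_mul_assoc matrix_vector_mult_uminus_left)
  qed
  ultimately obtain x where "x \<in> Ppoly A b" "T x = x"
    using Ppoly_fixed_point[OF P_bounded[rule_format] P_nonempty] continuous_on_subset
    by (metis image_subsetI top_greatest)
  moreover have "f x u = 0"
  proof -
    have "Jf *v x = Jf *v T x"
      using \<open>T x = x\<close> by simp
    also have "\<dots> = - ((Jf ** matrix_inv Jf) *v (M *v g x))"
      by (simp add: T_def vec.neg matrix_vector_mul_assoc matrix_mul_assoc)
    finally show ?thesis
      by (simp add: f_linearized matrix_inv_right[OF Jf_nonsing])
  qed
  ultimately show ?thesis by blast
qed

end
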